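(* Let $\delta>0$ and $q\ge 1$. There is a constant $C_{\delta,q}>0$ depending only on $\delta$ and $q$ such that for every nonnegative measurable $f$ on $\mathbb{T}^3\times\mathbb{R}^3\times\mathbb{R}^+$ with $0<\|f\|_{L^\infty_q}<\infty$, at every point $x$ where $\rho(x)>0$ and $0<T_\delta(x)<\infty$, $$\frac{\rho\,|U|^{3+\delta+q}}{\big[(T_\delta+|U|^2)\,T_\delta\big]^{\frac{3+\delta}{2}}}\ \le\ C_{\delta,q}\,\|f\|_{L^\infty_q}.$$
   Context: Fix $\delta>0$. For a nonnegative measurable function $f=f(x,v,I)$ on $\mathbb{T}^3\times\mathbb{R}^3\times\mathbb{R}^+$ define at each $x$ the macroscopic fields $\rho=\int_{\mathbb{R}^3\times\mathbb{R}^+}f\,dv\,dI$, $U=\rho^{-1}\int vf\,dv\,dI$, the translational temperature $T_{tr}$ by $\frac32\rho T_{tr}=\int\frac12|v-U|^2 f\,dv\,dI$, the non-translational temperature $T_{I,\delta}$ by $\frac{\delta}{2}\rho T_{I,\delta}=\int I^{2/\delta}f\,dv\,dI$, and the temperature $T_\delta=\frac{3}{3+\delta}T_{tr}+\frac{\delta}{3+\delta}T_{I,\delta}$ (equivalently $\frac{3+\delta}{2}\rho T_\delta=\int(\frac12|v-U|^2+I^{2/\delta})f\,dv\,dI$). The weighted norm is $\|f\|_{L^\infty_q}=\operatorname{ess\,sup}_{x,v,I}|f(x,v,I)|(1+|v|^2+I^{2/\delta})^{q/2}$. *)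

theory Defs
  imports "HOL-Analysis.Analysis" "HOL-Probability.Essential_Supremum"
begin

text \<open>Spatial domain: the torus T^3 represented by the unit cube [0,1]^3 with Lebesgue measure
(boundary has measure zero).  Velocity v in R^3, internal energy variable I in R^+ = (0,inf).\<close>

definition Xmeas :: "(real^3) measure" where
  "Xmeas = restrict_space lborel (cbox 0 1)"

definition VImeas :: "((real^3) \<times> real) measure" where
  "VImeas = lborel \<Otimes>\<^sub>M restrict_space lborel {0<..}"

definition Fullmeas :: "((real^3) \<times> ((real^3) \<times> real)) measure" where
  "Fullmeas = Xmeas \<Otimes>\<^sub>M VImeas"

definition Linfq_norm :: "real \<Rightarrow> real \<Rightarrow> (real^3 \<Rightarrow> real^3 \<Rightarrow> real \<Rightarrow> real) \<Rightarrow> ereal" where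
  "Linfq_norm \<delta> q f = esssup Fullmeas
     (\<lambda>(x,(v,I)). ereal (\<bar>f x v I\<bar> * (1 + (norm v)^2 + I powr (2/\<delta>)) powr (q/2)))"

definition rho :: "(real^3 \<Rightarrow> real^3 \<Rightarrow> real \<Rightarrow> real) \<Rightarrow> real^3 \<Rightarrow> real" where
  "rho f x = (\<integral>(v,I). f x v I \<partial>VImeas)"

definition bulk_U :: "(real^3 \<Rightarrow> real^3 \<Rightarrow> real \<Rightarrow> real) \<Rightarrow> real^3 \<Rightarrow> real^3" where
  "bulk_U f x = (1 / rho f x) *\<^sub>R (\<integral>(v,I). f x v I *\<^sub>R v \<partial>VImeas)"

definition T_tr :: "(real^3 \<Rightarrow> real^3 \<Rightarrow> real \<Rightarrow> real) \<Rightarrow> real^3 \<Rightarrow> real" where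
  "T_tr f x = (2 / (3 * rho f x)) * (\<integral>(v,I). (1/2) * (norm (v - bulk_U f x))^2 * f x v I \<partial>VImeas)"

definition T_I :: "real \<Rightarrow> (real^3 \<Rightarrow> real^3 \<Rightarrow> real \<Rightarrow> real) \<Rightarrow> real^3 \<Rightarrow> real" where
  "T_I \<delta> f x = (2 / (\<delta> * rho f x)) * (\<integral>(v,I). I powr (2/\<delta>) * f x v I \<partial>VImeas)"

definition T_delta :: "real \<Rightarrow> (real^3 \<Rightarrow> real^3 \<Rightarrow> real \<Rightarrow> real) \<Rightarrow> real^3 \<Rightarrow> real" where
  "T_delta \<delta> f x = 3 / (3 + \<delta>) * T_tr f x + \<delta> / (3 + \<delta>) * T_I \<delta> f x"

end

theory Submission
  imports Defs
begin

text \<open>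
  Since \<open>\<rho> |U|\<^sup>2 = \<integral> f v \<bullet> U\<close>, split phase space according to the speed \<open>|v|\<close> and the energy
  \<open>E = |v - U|\<^sup>2 + 2 I\<^bsup>2/\<delta>\<^esup>\<close>, whose integral is \<open>(3 + \<delta>) \<rho> T\<^sub>\<delta>\<close>. Slow particles
  (\<open>|v| \<le> |U|/2\<close>) contribute at most \<open>\<rho> |U|\<^sup>2 / 2\<close>, and particles with \<open>E > s\<^sup>2\<close> contribute at most
  \<open>(|U|\<^sup>2/s\<^sup>2 + |U|/s) (3 + \<delta>) \<rho> T\<^sub>\<delta>\<close>, which is below \<open>\<rho> |U|\<^sup>2 / 4\<close> for the radius
  \<open>s = 8 (3 + \<delta>) \<surd>((T\<^sub>\<delta> + |U|\<^sup>2) T\<^sub>\<delta>) / |U|\<close>. So a quarter of \<open>\<rho> |U|\<close> is carried by fast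
  particles of energy at most \<open>s\<^sup>2\<close>. These live in a set of measure \<open>O(s\<^bsup>3+\<delta>\<^esup>)\<close>, and there the weighted
  bound gives \<open>f |v| \<le> \<parallel>f\<parallel> (|U|/2)\<^bsup>1-q\<^esup>\<close>. Hence \<open>\<rho> |U| \<lesssim> \<parallel>f\<parallel> |U|\<^bsup>1-q\<^esup> s\<^bsup>3+\<delta>\<^esup>\<close>, which
  is the claim once \<open>s\<close> is substituted.
\<close>

lemma inner_le_split_by_energy:
  fixes v U :: "'a::real_inner"
  assumes U: "U \<noteq> 0" and s: "0 < s" and e: "(norm (v - U))\<^sup>2 \<le> e"
  shows "v \<bullet> U \<le> (norm U)\<^sup>2 / 2 + (if norm U / 2 < norm v \<and> e \<le> s\<^sup>2 then norm U * norm v else 0)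
           + ((norm U)\<^sup>2 / s\<^sup>2 + norm U / s) * e"
proof -
  define a where "a = norm U"
  have a: "0 < a" using U by (simp add: a_def)
  have cs: "v \<bullet> U \<le> norm v * a"
    unfolding a_def by (rule norm_cauchy_schwarz)
  have "0 \<le> e" using e by (meson order_trans zero_le_power2)
  then have tail_nonneg: "0 \<le> (a\<^sup>2 / s\<^sup>2 + a / s) * e"
    using a s by (intro mult_nonneg_nonneg add_nonneg_nonneg) auto
  consider "norm v \<le> a / 2" | "a / 2 < norm v" "e \<le> s\<^sup>2" | "s\<^sup>2 < e"
    by linarith
  then have "v \<bullet> U \<le> a\<^sup>2 / 2 + (if a / 2 < norm v \<and> e \<le> s\<^sup>2 then a * norm v else 0)
      + (a\<^sup>2 / s\<^sup>2 + a / s) * e"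
  proof cases
    case 1
    then have "norm v * a \<le> a / 2 * a" using a by (intro mult_right_mono) auto
    with cs have "v \<bullet> U \<le> a\<^sup>2 / 2" by (simp add: power2_eq_square)
    with 1 tail_nonneg show ?thesis by simp
  next
    case 2
    then have "(if a / 2 < norm v \<and> e \<le> s\<^sup>2 then a * norm v else 0) = norm v * a"
      by simp
    with cs tail_nonneg zero_le_power2[of a] show ?thesis by linarith
  next
    case 3
    \<comment> \<open>Far from \<open>U\<close> in energy, \<open>|v - U| \<le> e/s\<close> and \<open>1 \<le> e/s\<^sup>2\<close> absorb \<open>v \<bullet> U \<le> a |v - U| + a\<^sup>2\<close>.\<close>
    define d where "d = norm (v - U)"
    have "2 * d * s \<le> d\<^sup>2 + s\<^sup>2"
      using sum_squares_ge_zero[of "d - s" 0] by (simp add: power2_eq_square algebra_simps)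
    then have "d * s \<le> e" using 3 e by (simp add: d_def)
    then have "a * d \<le> a / s * e" using a s by (simp add: field_simps)
    moreover have "a\<^sup>2 * s\<^sup>2 \<le> a\<^sup>2 * e" using 3 by (intro mult_left_mono) auto
    then have "a\<^sup>2 \<le> a\<^sup>2 / s\<^sup>2 * e" using s by (simp add: field_simps)
    moreover have "v \<bullet> U \<le> a * d + a\<^sup>2"
    proof -
      have "norm v \<le> d + a" unfolding d_def a_def using norm_triangle_sub[of v U] by simp
      then have "norm v * a \<le> (d + a) * a" using a by (intro mult_right_mono) auto
      with cs show ?thesis by (simp add: algebra_simps power2_eq_square)
    qed
    moreover have "(if a / 2 < norm v \<and> e \<le> s\<^sup>2 then a * norm v else 0) = 0"
      using 3 by simp
    ultimately show ?thesis
      using distrib_right[of "a\<^sup>2 / s\<^sup>2" "a / s" e] zero_le_power2[of a] by linarith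
  qed
  then show ?thesis unfolding a_def .
qed

lemma bulk_speed_concentration:
  fixes g E :: "'z \<Rightarrow> real" and V :: "'z \<Rightarrow> 'v::{real_inner, banach, second_countable_topology}"
  assumes g_nonneg: "\<And>z. 0 \<le> g z" and g_int: "integrable M g"
    and V_meas: "V \<in> borel_measurable M" and E_meas: "E \<in> borel_measurable M"
    and gV_int: "integrable M (\<lambda>z. g z *\<^sub>R V z)" and gE_int: "integrable M (\<lambda>z. E z * g z)"
    and E_ge: "\<And>z. (norm (V z - U))\<^sup>2 \<le> E z"
    and mean: "(\<integral>z. g z *\<^sub>R V z \<partial>M) = (\<integral>z. g z \<partial>M) *\<^sub>R U"
    and U: "U \<noteq> 0" and s: "0 < s"
    and energy_small: "((norm U)\<^sup>2 / s\<^sup>2 + norm U / s) * (\<integral>z. E z * g z \<partial>M) \<le> (\<integral>z. g z \<partial>M) * (norm U)\<^sup>2 / 4"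
  shows "(\<integral>z. g z \<partial>M) * norm U
    \<le> 4 * (\<integral>z. (if norm U / 2 < norm (V z) \<and> E z \<le> s\<^sup>2 then g z * norm (V z) else 0) \<partial>M)"
proof -
  define \<rho> where "\<rho> = (\<integral>z. g z \<partial>M)"
  define a where "a = norm U"
  define h where "h z = (if a / 2 < norm (V z) \<and> E z \<le> s\<^sup>2 then g z * norm (V z) else 0)" for z
  define c where "c = a\<^sup>2 / s\<^sup>2 + a / s"
  have a: "0 < a" using U by (simp add: a_def)
  note [measurable] = V_meas E_meas borel_measurable_integrable[OF g_int]
  have h_int: "integrable M h"
  proof (rule Bochner_Integration.integrable_bound[OF integrable_norm[OF gV_int]])
    show "h \<in> borel_measurable M" unfolding h_def by measurable
    show "AE z in M. norm (h z) \<le> norm (norm (g z *\<^sub>R V z))"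
      using g_nonneg by (simp add: h_def)
  qed
  have "(\<integral>z. (g z *\<^sub>R V z) \<bullet> U \<partial>M) = \<rho> * a\<^sup>2"
    using integral_inner_left[of U M "\<lambda>z. g z *\<^sub>R V z"] gV_int
    by (simp add: mean \<rho>_def a_def power2_norm_eq_inner)
  then have "\<rho> * a\<^sup>2 = (\<integral>z. (g z *\<^sub>R V z) \<bullet> U \<partial>M)" ..
  also have "\<dots> \<le> (\<integral>z. g z * (a\<^sup>2 / 2) + a * h z + c * (E z * g z) \<partial>M)"
  proof (rule integral_mono)
    fix z
    have "V z \<bullet> U \<le> a\<^sup>2 / 2 + (if a / 2 < norm (V z) \<and> E z \<le> s\<^sup>2 then a * norm (V z) else 0) + c * E z"
      unfolding a_def c_def by (rule inner_le_split_by_energy[OF U s E_ge])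
    then have "g z * (V z \<bullet> U) \<le> g z * (a\<^sup>2 / 2 + (if a / 2 < norm (V z) \<and> E z \<le> s\<^sup>2 then a * norm (V z) else 0) + c * E z)"
      by (rule mult_left_mono) (rule g_nonneg)
    then show "(g z *\<^sub>R V z) \<bullet> U \<le> g z * (a\<^sup>2 / 2) + a * h z + c * (E z * g z)"
      by (auto simp: h_def algebra_simps split: if_splits)
  qed (use integrable_inner_left[of U M "\<lambda>z. g z *\<^sub>R V z"] gV_int g_int h_int gE_int in auto)
  also have "\<dots> = \<rho> * (a\<^sup>2 / 2) + a * (\<integral>z. h z \<partial>M) + c * (\<integral>z. E z * g z \<partial>M)"
    using g_int h_int gE_int by (simp add: \<rho>_def)
  also have "c * (\<integral>z. E z * g z \<partial>M) \<le> \<rho> * a\<^sup>2 / 4"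
    using energy_small by (simp add: c_def a_def \<rho>_def)
  finally have "\<rho> * a * a \<le> 4 * (\<integral>z. h z \<partial>M) * a"
    by (simp add: power2_eq_square algebra_simps)
  then show ?thesis
    using a by (simp add: \<rho>_def a_def h_def)
qed

lemma integrable_dominated:
  fixes h :: "'z \<Rightarrow> 'b::{banach, second_countable_topology}"
  assumes int: "integrable M (\<lambda>z. w z * g z)" and meas: "h \<in> borel_measurable M"
    and dom: "\<And>z. norm (h z) \<le> c * (w z * g z)"
  shows "integrable M h"
proof (rule Bochner_Integration.integrable_bound[OF integrable_mult_right[OF int, of c] meas])
  show "AE z in M. norm (h z) \<le> norm (c * (w z * g z))"
    using dom by (auto intro: order_trans abs_ge_self)
qed

lemma radius_choice:
  fixes a T \<kappa> :: real
  assumes a: "0 < a" and T: "0 < T" and \<kappa>: "1 \<le> \<kappa>"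
  defines "s \<equiv> 8 * \<kappa> * sqrt ((T + a\<^sup>2) * T) / a"
  shows "0 < s" and "(a\<^sup>2 / s\<^sup>2 + a / s) * (\<kappa> * T) \<le> a\<^sup>2 / 4"
proof -
  have P: "0 < (T + a\<^sup>2) * T" using T by (simp add: add_pos_nonneg)
  then show s: "0 < s" using a \<kappa> by (simp add: s_def)
  have "T \<le> sqrt ((T + a\<^sup>2) * T)"
    using T by (intro real_le_rsqrt) (simp add: power2_eq_square algebra_simps)
  then have s_ge: "8 * \<kappa> * T \<le> a * s"
    using a \<kappa> by (simp add: s_def)
  have "64 * \<kappa>\<^sup>2 * T \<le> 64 * \<kappa>\<^sup>2 * ((T + a\<^sup>2) * T) / a\<^sup>2"
    using a T by (simp add: field_simps power2_eq_square)
  also have "\<dots> = s\<^sup>2"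
    using P by (simp add: s_def power_divide power_mult_distrib)
  moreover have "1 * (8 * \<kappa> * T) \<le> (8 * \<kappa>) * (8 * \<kappa> * T)"
    using \<kappa> T by (intro mult_right_mono) auto
  ultimately have "8 * \<kappa> * T \<le> s\<^sup>2"
    by (simp add: power2_eq_square algebra_simps)
  then have "a\<^sup>2 * (8 * \<kappa> * T) \<le> a\<^sup>2 * s\<^sup>2"
    by (rule mult_left_mono) simp
  then have "a\<^sup>2 / s\<^sup>2 * (\<kappa> * T) \<le> a\<^sup>2 / 8"
    using s by (simp add: field_simps)
  moreover have "a / s * (\<kappa> * T) \<le> a\<^sup>2 / 8"
    using s_ge s a by (simp add: field_simps power2_eq_square)
  ultimately show "(a\<^sup>2 / s\<^sup>2 + a / s) * (\<kappa> * T) \<le> a\<^sup>2 / 4"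
    unfolding distrib_right by linarith
qed

lemma bound_in_terms_of_radius:
  fixes a K P \<rho> N e q :: real
  assumes a: "0 < a" and K: "0 < K" and P: "0 < P"
    and bound: "\<rho> * a \<le> 32 * N * (a / 2) powr (1 - q) * (K * sqrt P / a) powr e"
  shows "\<rho> * a powr (e + q) \<le> 32 * 2 powr (q - 1) * K powr e * N * P powr (e / 2)"
proof -
  have radius: "(K * sqrt P / a) powr e = K powr e * P powr (e / 2) / a powr e"
    using K P a by (simp add: powr_mult powr_divide powr_powr flip: powr_half_sqrt)
  have half: "(a / 2) powr (1 - q) = 2 powr (q - 1) * a powr (1 - q)"
    using a by (simp add: powr_divide powr_diff)
  have cancel: "a powr (1 - q) * a powr (e + q - 1) = a powr e"
    using a by (simp flip: powr_add)
  have "32 * N * (a / 2) powr (1 - q) * (K * sqrt P / a) powr e * a powr (e + q - 1)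
      = 32 * 2 powr (q - 1) * K powr e * N * P powr (e / 2) * (a powr (1 - q) * a powr (e + q - 1)) / a powr e"
    unfolding radius half by (simp add: field_simps)
  also have "\<dots> = 32 * 2 powr (q - 1) * K powr e * N * P powr (e / 2)"
    using a unfolding cancel by simp
  finally have rhs: "32 * N * (a / 2) powr (1 - q) * (K * sqrt P / a) powr e * a powr (e + q - 1)
      = 32 * 2 powr (q - 1) * K powr e * N * P powr (e / 2)" .
  moreover have "\<rho> * a powr (e + q) = \<rho> * a * a powr (e + q - 1)"
    using a powr_add[of a 1 "e + q - 1"] by (simp add: mult.assoc)
  ultimately show ?thesis
    using bound by (metis mult_right_mono powr_ge_zero)
qed

lemma speed_le_of_weighted_bound:
  fixes g r W b N q :: real
  assumes g: "0 \<le> g" and b: "0 < b" "b < r" and W: "r\<^sup>2 \<le> W"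
    and bound: "g * W powr (q / 2) \<le> N" and q: "1 \<le> q"
  shows "g * r \<le> N * b powr (1 - q)"
proof -
  have r: "0 < r" using b by linarith
  have "r powr q = (r\<^sup>2) powr (q / 2)"
    using r by (simp add: powr_powr flip: powr_numeral)
  also have "\<dots> \<le> W powr (q / 2)"
    using W q by (intro powr_mono2) auto
  finally have "g * r powr q \<le> N"
    using bound mult_left_mono[OF _ g] by (meson order_trans)
  moreover have "r powr (1 - q) \<le> b powr (1 - q)"
    using b q by (intro powr_mono2') auto
  ultimately have "g * r powr q * r powr (1 - q) \<le> N * b powr (1 - q)"
    using g by (meson mult_mono order_trans powr_ge_zero zero_le_mult_iff)
  then show ?thesis
    using r by (simp add: mult.assoc flip: powr_add)
qed

lemma box_volume_le:
  fixes s \<delta> :: real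
  assumes s: "0 < s" and \<delta>: "0 < \<delta>"
  shows "(2 * s) ^ 3 * (s\<^sup>2 / 2) powr (\<delta> / 2) \<le> 8 * s powr (3 + \<delta>)"
proof -
  have "(s\<^sup>2 / 2) powr (\<delta> / 2) \<le> (s\<^sup>2) powr (\<delta> / 2)"
    using \<delta> by (intro powr_mono2) auto
  also have "\<dots> = s powr \<delta>"
    using s by (simp add: powr_powr flip: powr_numeral)
  finally have "s ^ 3 * (s\<^sup>2 / 2) powr (\<delta> / 2) \<le> s powr 3 * s powr \<delta>"
    using s by (simp add: mult_left_mono flip: powr_numeral)
  then show ?thesis
    by (simp add: power_mult_distrib powr_add)
qed

lemma sigma_finite_Xmeas: "sigma_finite_measure Xmeas"
  unfolding Xmeas_def
  by (rule sigma_finite_measure_restrict_space) (auto intro: lborel.sigma_finite_measure_axioms)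

lemma sigma_finite_VImeas: "sigma_finite_measure VImeas"
proof -
  have "sigma_finite_measure (restrict_space lborel ({0<..} :: real set))"
    by (rule sigma_finite_measure_restrict_space) (auto intro: lborel.sigma_finite_measure_axioms)
  then show ?thesis
    unfolding VImeas_def by (intro sigma_finite_pair_measure lborel.sigma_finite_measure_axioms)
qed

lemma space_VImeas: "space VImeas = UNIV \<times> {0<..}"
  by (simp add: VImeas_def space_pair_measure space_restrict_space)

lemma measurable_fst_VImeas [measurable]: "fst \<in> borel_measurable VImeas"
  unfolding VImeas_def by measurable

lemma measurable_snd_VImeas [measurable]: "snd \<in> borel_measurable VImeas"
  unfolding VImeas_def by (rule measurable_snd'') (simp add: measurable_restrict_space1)

lemma emeasure_VImeas_box:
  fixes U :: "real^3"
  assumes "0 \<le> s" "0 \<le> t"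
  shows "emeasure VImeas (cbox (U - s *\<^sub>R 1) (U + s *\<^sub>R 1) \<times> {0<..t}) = ennreal ((2 * s) ^ 3 * t)"
proof -
  let ?B = "cbox (U - s *\<^sub>R 1) (U + s *\<^sub>R 1)"
  interpret sigma_finite_measure "restrict_space lborel ({0<..} :: real set)"
    by (rule sigma_finite_measure_restrict_space) (auto intro: lborel.sigma_finite_measure_axioms)
  have "U \<in> ?B" using assms by (simp add: mem_box_cart)
  then have "?B \<noteq> {}" by blast
  then have "measure lborel ?B = (2 * s) ^ 3"
    by (simp add: content_cbox_cart)
  then have "emeasure lborel ?B = ennreal ((2 * s) ^ 3)"
    using emeasure_eq_ennreal_measure[of lborel ?B] emeasure_lborel_cbox_finite[of "U - s *\<^sub>R 1"]
    by (simp add: less_top)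
  moreover have "emeasure (restrict_space lborel {0<..}) {0<..t} = ennreal t"
    using assms by (subst emeasure_restrict_space) auto
  moreover have "emeasure VImeas (?B \<times> {0<..t}) =
      emeasure lborel ?B * emeasure (restrict_space lborel ({0<..} :: real set)) {0<..t}"
    unfolding VImeas_def by (rule emeasure_pair_measure_Times) (auto simp: sets_restrict_space)
  ultimately show ?thesis
    using assms by (simp add: ennreal_mult)
qed

definition kinetic_weight :: "real \<Rightarrow> 'a::real_normed_vector \<times> real \<Rightarrow> real" where
  "kinetic_weight \<delta> z = 1 + (norm (fst z))\<^sup>2 + snd z powr (2 / \<delta>)"

text \<open>Twice the paper's \<open>|v - U|\<^sup>2/2 + I\<^bsup>2/\<delta>\<^esup>\<close>, so that its integral against \<open>f\<close> is \<open>(3 + \<delta>) \<rho> T\<^sub>\<delta>\<close>.\<close>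

definition energy :: "real \<Rightarrow> 'a::real_normed_vector \<Rightarrow> 'a \<times> real \<Rightarrow> real" where
  "energy \<delta> U z = (norm (fst z - U))\<^sup>2 + 2 * snd z powr (2 / \<delta>)"

lemma energy_sublevel_subset_box:
  fixes U :: "real^'n"
  assumes \<delta>: "0 < \<delta>" and s: "0 \<le> s" and I: "0 < snd z" and E: "energy \<delta> U z \<le> s\<^sup>2"
  shows "z \<in> cbox (U - s *\<^sub>R 1) (U + s *\<^sub>R 1) \<times> {0<..(s\<^sup>2 / 2) powr (\<delta> / 2)}"
proof -
  have dist: "(norm (fst z - U))\<^sup>2 \<le> s\<^sup>2" and internal: "snd z powr (2 / \<delta>) \<le> s\<^sup>2 / 2"
    using E powr_ge_zero[of "snd z" "2 / \<delta>"] zero_le_power2[of "norm (fst z - U)"]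
    unfolding energy_def by linarith+
  from dist have "norm (fst z - U) \<le> s"
    using s by (simp add: power2_le_iff_abs_le)
  then have "\<bar>(fst z - U) $ i\<bar> \<le> s" for i
    using component_le_norm_cart[of "fst z - U" i] by linarith
  then have "fst z \<in> cbox (U - s *\<^sub>R 1) (U + s *\<^sub>R 1)"
    by (auto simp: mem_box_cart abs_le_iff algebra_simps)
  moreover have "snd z \<le> (s\<^sup>2 / 2) powr (\<delta> / 2)"
  proof -
    have "snd z = (snd z powr (2 / \<delta>)) powr (\<delta> / 2)"
      using I \<delta> by (simp add: powr_powr)
    also have "\<dots> \<le> (s\<^sup>2 / 2) powr (\<delta> / 2)"
      using internal \<delta> by (intro powr_mono2) auto
    finally show ?thesis .
  qed
  ultimately show ?thesis
    using I by (simp add: mem_Times_iff)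
qed

lemma integral_fast_particles_le:
  fixes g :: "(real^3) \<times> real \<Rightarrow> real" and U :: "real^3"
  assumes \<delta>: "0 < \<delta>" and q: "1 \<le> q" and N: "0 \<le> N" and b: "0 < b" and s: "0 < s"
    and g_nonneg: "\<And>z. 0 \<le> g z"
    and bound: "AE z in VImeas. g z * kinetic_weight \<delta> z powr (q / 2) \<le> N"
  shows "(\<integral>z. (if b < norm (fst z) \<and> energy \<delta> U z \<le> s\<^sup>2 then g z * norm (fst z) else 0) \<partial>VImeas)
    \<le> 8 * N * b powr (1 - q) * s powr (3 + \<delta>)"
proof -
  define t where "t = (s\<^sup>2 / 2) powr (\<delta> / 2)"
  define D where "D = cbox (U - s *\<^sub>R 1) (U + s *\<^sub>R 1) \<times> {0<..t}"
  define c where "c = N * b powr (1 - q)"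
  have c: "0 \<le> c" using N by (simp add: c_def)
  have D_emeasure: "emeasure VImeas D = ennreal ((2 * s) ^ 3 * t)"
    unfolding D_def using s by (intro emeasure_VImeas_box) (auto simp: t_def)
  have D_sets: "D \<in> sets VImeas"
    unfolding D_def VImeas_def by (rule pair_measureI) (auto simp: sets_restrict_space)
  have D_int: "integrable VImeas (\<lambda>z. c * indicator D z)"
    using D_sets D_emeasure by (simp add: integrable_indicator_iff)
  have "(\<integral>z. (if b < norm (fst z) \<and> energy \<delta> U z \<le> s\<^sup>2 then g z * norm (fst z) else 0) \<partial>VImeas)
      \<le> (\<integral>z. c * indicator D z \<partial>VImeas)"
  proof (rule integral_mono_AE'[OF D_int])
    show "AE z in VImeas. (if b < norm (fst z) \<and> energy \<delta> U z \<le> s\<^sup>2 then g z * norm (fst z) else 0)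
        \<le> c * indicator D z"
      using bound AE_space
    proof eventually_elim
      case (elim z)
      show ?case
      proof (cases "b < norm (fst z) \<and> energy \<delta> U z \<le> s\<^sup>2")
        case True
        have "z \<in> D"
          using True elim(2) energy_sublevel_subset_box[OF \<delta>, of s z U] s
          by (auto simp: D_def t_def space_VImeas)
        moreover have "g z * norm (fst z) \<le> c"
          unfolding c_def using True elim(1)
          by (intro speed_le_of_weighted_bound[OF g_nonneg b]) (auto simp: kinetic_weight_def q)
        ultimately show ?thesis using True by simp
      next
        case False
        then show ?thesis using c by auto
      qed
    qed
  qed (use c in simp)
  also have "\<dots> = c * ((2 * s) ^ 3 * t)"
    using D_emeasure D_sets s by (simp add: measure_def t_def sets.Int_space_eq2)
  also have "\<dots> \<le> c * (8 * s powr (3 + \<delta>))"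
    unfolding t_def using box_volume_le[OF s \<delta>] c by (rule mult_left_mono)
  finally show ?thesis by (simp add: c_def)
qed

lemma integrable_moments:
  fixes g :: "(real^3) \<times> real \<Rightarrow> real" and U :: "real^3"
  assumes g_nonneg: "\<And>z. 0 \<le> g z" and g_meas [measurable]: "g \<in> borel_measurable VImeas"
    and weight_int: "integrable VImeas (\<lambda>z. kinetic_weight \<delta> z * g z)"
  shows "integrable VImeas g"
    and "integrable VImeas (\<lambda>z. g z *\<^sub>R fst z)"
    and "integrable VImeas (\<lambda>z. (norm (fst z - U))\<^sup>2 * g z)"
    and "integrable VImeas (\<lambda>z. snd z powr (2 / \<delta>) * g z)"
    and "integrable VImeas (\<lambda>z. energy \<delta> U z * g z)"
proof -
  have weight: "1 \<le> kinetic_weight \<delta> z" "(norm (fst z))\<^sup>2 \<le> kinetic_weight \<delta> z"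
    "snd z powr (2 / \<delta>) \<le> kinetic_weight \<delta> z" for z :: "(real^3) \<times> real"
    by (simp_all add: kinetic_weight_def)
  have speed: "norm (fst z) \<le> kinetic_weight \<delta> z" for z :: "(real^3) \<times> real"
    using weight(1,2)[of z] sum_squares_ge_zero[of "norm (fst z) - 1" 0]
    by (simp add: power2_eq_square algebra_simps)
  have relative: "(norm (fst z - U))\<^sup>2 \<le> (2 + 2 * (norm U)\<^sup>2) * kinetic_weight \<delta> z"
    for z :: "(real^3) \<times> real"
  proof -
    have "(norm (fst z - U))\<^sup>2 \<le> (norm (fst z) + norm U)\<^sup>2"
      by (intro power_mono norm_triangle_ineq4) simp
    also have "\<dots> \<le> 2 * (norm (fst z))\<^sup>2 + 2 * (norm U)\<^sup>2"
      using sum_squares_ge_zero[of "norm (fst z) - norm U" 0] by (simp add: power2_eq_square algebra_simps)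
    also have "\<dots> \<le> (2 + 2 * (norm U)\<^sup>2) * kinetic_weight \<delta> z"
      using weight(1,2)[of z] mult_left_mono[OF weight(1)[of z], of "2 * (norm U)\<^sup>2"]
      by (simp add: distrib_right)
    finally show ?thesis .
  qed
  show g_int: "integrable VImeas g"
  proof (rule integrable_dominated[OF weight_int, of _ 1])
    show "norm (g z) \<le> 1 * (kinetic_weight \<delta> z * g z)" for z
      using mult_right_mono[OF weight(1)[of z] g_nonneg[of z]] g_nonneg[of z] by simp
  qed simp
  show "integrable VImeas (\<lambda>z. g z *\<^sub>R fst z)"
    by (rule integrable_dominated[OF weight_int, of _ 1])
      (use speed g_nonneg in \<open>auto simp: mult.commute intro: mult_left_mono\<close>)
  show A_int: "integrable VImeas (\<lambda>z. (norm (fst z - U))\<^sup>2 * g z)"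
  proof (rule integrable_dominated[OF weight_int, of _ "2 + 2 * (norm U)\<^sup>2"])
    show "norm ((norm (fst z - U))\<^sup>2 * g z) \<le> (2 + 2 * (norm U)\<^sup>2) * (kinetic_weight \<delta> z * g z)" for z
      using mult_right_mono[OF relative[of z] g_nonneg[of z]] g_nonneg[of z] by (simp add: mult.assoc)
  qed simp
  show B_int: "integrable VImeas (\<lambda>z. snd z powr (2 / \<delta>) * g z)"
    by (rule integrable_dominated[OF weight_int, of _ 1])
      (use weight(3) g_nonneg in \<open>auto intro: mult_right_mono\<close>)
  show "integrable VImeas (\<lambda>z. energy \<delta> U z * g z)"
    using Bochner_Integration.integrable_add[OF A_int integrable_mult_right[OF B_int, of 2]]
    by (simp add: energy_def algebra_simps)
qed

lemma bulk_speed_moment_bound: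
  fixes g :: "(real^3) \<times> real \<Rightarrow> real" and U :: "real^3"
  assumes \<delta>: "0 < \<delta>" and q: "1 \<le> q" and N: "0 \<le> N"
    and g_nonneg: "\<And>z. 0 \<le> g z" and g_meas: "g \<in> borel_measurable VImeas"
    and weight_int: "integrable VImeas (\<lambda>z. kinetic_weight \<delta> z * g z)"
    and bound: "AE z in VImeas. g z * kinetic_weight \<delta> z powr (q / 2) \<le> N"
    and \<rho>: "0 < \<rho>" "(\<integral>z. g z \<partial>VImeas) = \<rho>"
    and mean: "(\<integral>z. g z *\<^sub>R fst z \<partial>VImeas) = \<rho> *\<^sub>R U"
    and T: "0 < T" "(3 + \<delta>) * \<rho> * T = (\<integral>z. energy \<delta> U z * g z \<partial>VImeas)"
  shows "\<rho> * norm U powr (3 + \<delta> + q)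
    \<le> 32 * 2 powr (q - 1) * (8 * (3 + \<delta>)) powr (3 + \<delta>) * N * ((T + (norm U)\<^sup>2) * T) powr ((3 + \<delta>) / 2)"
proof (cases "U = 0")
  case True
  then show ?thesis using N by simp
next
  case False
  define a where "a = norm U"
  define s where "s = 8 * (3 + \<delta>) * sqrt ((T + a\<^sup>2) * T) / a"
  have a: "0 < a" using False by (simp add: a_def)
  have s: "0 < s" and small: "(a\<^sup>2 / s\<^sup>2 + a / s) * ((3 + \<delta>) * T) \<le> a\<^sup>2 / 4"
    using radius_choice[OF a T(1), of "3 + \<delta>"] \<delta> by (simp_all add: s_def)
  note integrable = integrable_moments[OF g_nonneg g_meas weight_int]
  have "(\<integral>z. g z \<partial>VImeas) * norm U
      \<le> 4 * (\<integral>z. (if norm U / 2 < norm (fst z) \<and> energy \<delta> U z \<le> s\<^sup>2 then g z * norm (fst z) else 0) \<partial>VImeas)"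
  proof (rule bulk_speed_concentration[where V = fst,
        OF g_nonneg integrable(1) measurable_fst_VImeas _ integrable(2) integrable(5) _ _ False s])
    show "energy \<delta> U \<in> borel_measurable VImeas"
      unfolding energy_def by measurable
    show "(\<integral>z. g z *\<^sub>R fst z \<partial>VImeas) = (\<integral>z. g z \<partial>VImeas) *\<^sub>R U"
      by (simp add: mean \<rho>(2))
    show "(norm (fst z - U))\<^sup>2 \<le> energy \<delta> U z" for z
      by (simp add: energy_def)
    have "(a\<^sup>2 / s\<^sup>2 + a / s) * ((3 + \<delta>) * \<rho> * T) \<le> \<rho> * (a\<^sup>2 / 4)"
      using mult_left_mono[OF small, of \<rho>] \<rho>(1) by (simp add: ac_simps)
    then show "((norm U)\<^sup>2 / s\<^sup>2 + norm U / s) * (\<integral>z. energy \<delta> U z * g z \<partial>VImeas)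
        \<le> (\<integral>z. g z \<partial>VImeas) * (norm U)\<^sup>2 / 4"
      by (simp add: T(2) \<rho>(2) a_def)
  qed
  then have "\<rho> * a \<le> 4 * (\<integral>z. (if a / 2 < norm (fst z) \<and> energy \<delta> U z \<le> s\<^sup>2 then g z * norm (fst z) else 0) \<partial>VImeas)"
    by (simp add: \<rho>(2) a_def)
  also have "\<dots> \<le> 4 * (8 * N * (a / 2) powr (1 - q) * s powr (3 + \<delta>))"
    using integral_fast_particles_le[OF \<delta> q N _ s g_nonneg bound, of "a / 2" U] a by linarith
  finally have "\<rho> * a \<le> 32 * N * (a / 2) powr (1 - q) * s powr (3 + \<delta>)"
    by simp
  then have "\<rho> * a powr (3 + \<delta> + q) \<le> 32 * 2 powr (q - 1) * (8 * (3 + \<delta>)) powr (3 + \<delta>) * N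
      * ((T + a\<^sup>2) * T) powr ((3 + \<delta>) / 2)"
    unfolding s_def using \<delta> a T(1) by (intro bound_in_terms_of_radius) (auto simp: add_pos_nonneg)
  then show ?thesis
    unfolding a_def .
qed

lemma macroscopic_fields_as_moments:
  fixes f :: "real^3 \<Rightarrow> real^3 \<Rightarrow> real \<Rightarrow> real"
  assumes \<delta>: "0 < \<delta>" and \<rho>: "rho f x \<noteq> 0"
    and A_int: "integrable VImeas (\<lambda>z. (norm (fst z - bulk_U f x))\<^sup>2 * f x (fst z) (snd z))"
    and B_int: "integrable VImeas (\<lambda>z. snd z powr (2 / \<delta>) * f x (fst z) (snd z))"
  shows "(\<integral>z. f x (fst z) (snd z) \<partial>VImeas) = rho f x"
    and "(\<integral>z. f x (fst z) (snd z) *\<^sub>R fst z \<partial>VImeas) = rho f x *\<^sub>R bulk_U f x"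
    and "(3 + \<delta>) * rho f x * T_delta \<delta> f x
      = (\<integral>z. energy \<delta> (bulk_U f x) z * f x (fst z) (snd z) \<partial>VImeas)"
proof -
  define A where "A = (\<integral>z. (norm (fst z - bulk_U f x))\<^sup>2 * f x (fst z) (snd z) \<partial>VImeas)"
  define B where "B = (\<integral>z. snd z powr (2 / \<delta>) * f x (fst z) (snd z) \<partial>VImeas)"
  show "(\<integral>z. f x (fst z) (snd z) \<partial>VImeas) = rho f x"
    by (simp add: rho_def split_beta')
  show "(\<integral>z. f x (fst z) (snd z) *\<^sub>R fst z \<partial>VImeas) = rho f x *\<^sub>R bulk_U f x"
    using \<rho> by (simp add: bulk_U_def split_beta')
  have A: "rho f x * T_tr f x = A / 3"
    using \<rho> by (simp add: T_tr_def A_def split_beta')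
  have B: "rho f x * T_I \<delta> f x = 2 * B / \<delta>"
    using \<delta> \<rho> by (simp add: T_I_def B_def split_beta')
  have "(3 + \<delta>) * T_delta \<delta> f x = 3 * T_tr f x + \<delta> * T_I \<delta> f x"
    using \<delta> by (simp add: T_delta_def distrib_left)
  then have "(3 + \<delta>) * rho f x * T_delta \<delta> f x = 3 * (rho f x * T_tr f x) + \<delta> * (rho f x * T_I \<delta> f x)"
    by (metis mult.assoc mult.commute distrib_left)
  also have "\<dots> = A + 2 * B"
    using \<delta> by (simp add: A B)
  also have "\<dots> = (\<integral>z. (norm (fst z - bulk_U f x))\<^sup>2 * f x (fst z) (snd z)
      + 2 * (snd z powr (2 / \<delta>) * f x (fst z) (snd z)) \<partial>VImeas)"
    using A_int B_int by (simp add: A_def B_def)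
  also have "\<dots> = (\<integral>z. energy \<delta> (bulk_U f x) z * f x (fst z) (snd z) \<partial>VImeas)"
    by (simp add: energy_def distrib_right mult.assoc)
  finally show "(3 + \<delta>) * rho f x * T_delta \<delta> f x
      = (\<integral>z. energy \<delta> (bulk_U f x) z * f x (fst z) (snd z) \<partial>VImeas)" .
qed

lemma measurable_slice:
  assumes "(\<lambda>(x, v, I). f x v I) \<in> borel_measurable Fullmeas" and "x \<in> space Xmeas"
  shows "(\<lambda>z. f x (fst z) (snd z)) \<in> borel_measurable VImeas"
  using measurable_Pair2[OF assms(1)[unfolded Fullmeas_def] assms(2)] by (simp add: split_beta')

lemma AE_slices_le_Linfq_norm:
  assumes "Linfq_norm \<delta> q f = ereal N"
  shows "AE x in Xmeas. AE z in VImeas. \<bar>f x (fst z) (snd z)\<bar> * kinetic_weight \<delta> z powr (q / 2) \<le> N"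
proof -
  interpret X: sigma_finite_measure Xmeas by (rule sigma_finite_Xmeas)
  interpret V: sigma_finite_measure VImeas by (rule sigma_finite_VImeas)
  interpret pair_sigma_finite Xmeas VImeas ..
  have "AE y in Fullmeas. (\<lambda>(x, v, I). ereal (\<bar>f x v I\<bar> * (1 + (norm v)\<^sup>2 + I powr (2 / \<delta>)) powr (q / 2))) y \<le> ereal N"
    using esssup_AE[of _ Fullmeas] unfolding assms[symmetric] Linfq_norm_def .
  then have "AE x in Xmeas. AE z in VImeas.
      (\<lambda>(x, v, I). ereal (\<bar>f x v I\<bar> * (1 + (norm v)\<^sup>2 + I powr (2 / \<delta>)) powr (q / 2))) (x, z) \<le> ereal N"
    unfolding Fullmeas_def by (rule AE_pair)
  then show ?thesis
    by (simp add: kinetic_weight_def split_beta')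
qed

lemma macroscopic_moment_bound:
  fixes f :: "real^3 \<Rightarrow> real^3 \<Rightarrow> real \<Rightarrow> real"
  assumes \<delta>: "0 < \<delta>" and q: "1 \<le> q" and N: "0 \<le> N"
    and f_nonneg: "\<And>v I. 0 \<le> f x v I"
    and f_meas: "(\<lambda>z. f x (fst z) (snd z)) \<in> borel_measurable VImeas"
    and weight_int: "integrable VImeas (\<lambda>(v, I). (1 + (norm v)\<^sup>2 + I powr (2 / \<delta>)) * f x v I)"
    and bound: "AE z in VImeas. \<bar>f x (fst z) (snd z)\<bar> * kinetic_weight \<delta> z powr (q / 2) \<le> N"
    and \<rho>: "0 < rho f x" and T: "0 < T_delta \<delta> f x"
  shows "rho f x * norm (bulk_U f x) powr (3 + \<delta> + q)
      / ((T_delta \<delta> f x + (norm (bulk_U f x))\<^sup>2) * T_delta \<delta> f x) powr ((3 + \<delta>) / 2)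
    \<le> 32 * 2 powr (q - 1) * (8 * (3 + \<delta>)) powr (3 + \<delta>) * N"
proof -
  let ?g = "\<lambda>z. f x (fst z) (snd z)"
  have g_weight_int: "integrable VImeas (\<lambda>z. kinetic_weight \<delta> z * ?g z)"
    using weight_int by (simp add: kinetic_weight_def split_beta')
  note integrable = integrable_moments[OF f_nonneg f_meas g_weight_int]
  note moments = macroscopic_fields_as_moments[where f = f and x = x, OF \<delta> _ integrable(3,4)]
  have "rho f x * norm (bulk_U f x) powr (3 + \<delta> + q) \<le> 32 * 2 powr (q - 1) * (8 * (3 + \<delta>)) powr (3 + \<delta>) * N
      * ((T_delta \<delta> f x + (norm (bulk_U f x))\<^sup>2) * T_delta \<delta> f x) powr ((3 + \<delta>) / 2)"
    using bound f_nonneg \<rho> T moments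
    by (intro bulk_speed_moment_bound[OF \<delta> q N f_nonneg f_meas g_weight_int]) simp_all
  moreover have "0 < ((T_delta \<delta> f x + (norm (bulk_U f x))\<^sup>2) * T_delta \<delta> f x) powr ((3 + \<delta>) / 2)"
    using T add_pos_nonneg[OF T zero_le_power2[of "norm (bulk_U f x)"]] by simp
  ultimately show ?thesis
    by (simp add: divide_le_eq mult.assoc)
qed

theorem lemma3p4:
  fixes \<delta> q :: real
  assumes "\<delta> > 0" and "q \<ge> 1"
  shows "\<exists>C>0. \<forall>f :: real^3 \<Rightarrow> real^3 \<Rightarrow> real \<Rightarrow> real.
     (\<forall>x v I. 0 \<le> f x v I) \<longrightarrow>
     (\<lambda>(x,(v,I)). f x v I) \<in> borel_measurable Fullmeas \<longrightarrow>
     0 < Linfq_norm \<delta> q f \<longrightarrow> Linfq_norm \<delta> q f < \<infinity> \<longrightarrow>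
     (AE x in Xmeas.
        0 < rho f x \<longrightarrow>
        integrable VImeas (\<lambda>(v,I). (1 + (norm v)^2 + I powr (2/\<delta>)) * f x v I) \<longrightarrow>
        0 < T_delta \<delta> f x \<longrightarrow>
        rho f x * norm (bulk_U f x) powr (3 + \<delta> + q)
          / ((T_delta \<delta> f x + (norm (bulk_U f x))^2) * T_delta \<delta> f x) powr ((3 + \<delta>) / 2)
        \<le> C * real_of_ereal (Linfq_norm \<delta> q f))"
proof (intro exI[of _ "32 * 2 powr (q - 1) * (8 * (3 + \<delta>)) powr (3 + \<delta>)"] conjI allI impI)
  show "0 < 32 * 2 powr (q - 1) * (8 * (3 + \<delta>)) powr (3 + \<delta>)"
    using assms by simp
  fix f :: "real^3 \<Rightarrow> real^3 \<Rightarrow> real \<Rightarrow> real"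
  assume nonneg: "\<forall>x v I. 0 \<le> f x v I"
    and meas: "(\<lambda>(x,(v,I)). f x v I) \<in> borel_measurable Fullmeas"
    and pos: "0 < Linfq_norm \<delta> q f" and fin: "Linfq_norm \<delta> q f < \<infinity>"
  obtain N where N: "Linfq_norm \<delta> q f = ereal N"
    using pos fin by (cases "Linfq_norm \<delta> q f") auto
  with pos have "0 \<le> N" by simp
  show "AE x in Xmeas. 0 < rho f x \<longrightarrow>
      integrable VImeas (\<lambda>(v,I). (1 + (norm v)^2 + I powr (2/\<delta>)) * f x v I) \<longrightarrow>
      0 < T_delta \<delta> f x \<longrightarrow>
      rho f x * norm (bulk_U f x) powr (3 + \<delta> + q)
        / ((T_delta \<delta> f x + (norm (bulk_U f x))^2) * T_delta \<delta> f x) powr ((3 + \<delta>) / 2)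
      \<le> 32 * 2 powr (q - 1) * (8 * (3 + \<delta>)) powr (3 + \<delta>) * real_of_ereal (Linfq_norm \<delta> q f)"
    unfolding N real_of_ereal.simps
    using AE_slices_le_Linfq_norm[OF N] AE_space
  proof eventually_elim
    case (elim x)
    show ?case
      using macroscopic_moment_bound[where f = f and x = x, OF assms \<open>0 \<le> N\<close> _ measurable_slice[OF meas elim(2)] _ elim(1)] nonneg
      by blast
  qed
qed

end
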